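(* In the allocation problem described in the context, let $\eta_1,\ldots,\eta_n$ be speed functions and let $a^\pi$ be the allocation produced by the extended SG mechanism with these speeds when every agent $i$ bids its true list $\pi_i$. Then $a^\pi$ is Pareto optimal: there is no allocation $a$ such that every agent $i$ weakly prefers $a_{i*}$ to $a^\pi_{i*}$ (i.e., $a_{i*}=a^\pi_{i*}$ or $a_{i*}>_i a^\pi_{i*}$) and some agent $i$ has $a_{i*}>_i a^\pi_{i*}$.
   Context: There are $m$ distinct divisible goods; good $j$ is available in amount $q_j>0$. There are $n$ agents; agent $i$ is to receive a total of $r_i>0$, with $\sum_j q_j=\sum_i r_i$. An allocation is a family $a_{ij}\ge 0$ with $\sum_j a_{ij}=r_i$ and $\sum_i a_{ij}=q_j$; $a_{i*}=(a_{i1},\ldots,a_{im})$ is agent $i$'s share. Each agent $i$ has a true preference list $\pi_i$, a permutation of the goods ($\pi_i(1)$ most preferred). Agent $i$ prefers $a_{i*}$ to $b_{i*}$, written $a_{i*}>_i b_{i*}$, if the leftmost nonzero coordinate of $(a_{i\pi_i(\ell)}-b_{i\pi_i(\ell)})_{\ell=1}^m$ is positive. A speed function for agent $i$ is a nonnegative integrable function $\eta_i:[0,1]\to\mathbb{R}_{\ge 0}$ with $\int_0^1\eta_i(t)\,dt=r_i$. The extended SG mechanism with speeds $\eta_1,\ldots,\eta_n$: each agent $i$ bids a permutation $\sigma_i$ of the goods; over time $t\in[0,1]$, each agent $i$ receives, at rate $\eta_i(t)$, the good highest in $\sigma_i$ among those not yet exhausted (a good is exhausted when the total amount handed out equals $q_j$;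 several agents may receive a good simultaneously; upon exhaustion, agents receiving it switch to their next non-exhausted good). The resulting allocation records the total amount of each good each agent receives. *)

theory Defs
  imports "HOL-Analysis.Analysis"
begin

text \<open>Agents are 0..n-1, goods are 0..m-1. A preference list / bid is a function
  p :: nat => nat with p l = the good ranked l (rank 0 = most preferred), a bijection
  of {..<m}.\<close>

definition is_allocation :: "nat \<Rightarrow> nat \<Rightarrow> (nat \<Rightarrow> real) \<Rightarrow> (nat \<Rightarrow> real)
    \<Rightarrow> (nat \<Rightarrow> nat \<Rightarrow> real) \<Rightarrow> bool" where
  "is_allocation n m q r a \<longleftrightarrow>
     (\<forall>i<n. \<forall>j<m. a i j \<ge> 0) \<and>
     (\<forall>i<n. (\<Sum>j<m. a i j) = r i) \<and>
     (\<forall>j<m. (\<Sum>i<n. a i j) = q j)"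

definition lex_prefers :: "nat \<Rightarrow> (nat \<Rightarrow> nat) \<Rightarrow> (nat \<Rightarrow> real) \<Rightarrow> (nat \<Rightarrow> real) \<Rightarrow> bool" where
  "lex_prefers m p u w \<longleftrightarrow>
     (\<exists>k<m. (\<forall>l<k. u (p l) = w (p l)) \<and> u (p k) > w (p k))"

definition weakly_prefers :: "nat \<Rightarrow> (nat \<Rightarrow> nat) \<Rightarrow> (nat \<Rightarrow> real) \<Rightarrow> (nat \<Rightarrow> real) \<Rightarrow> bool" where
  "weakly_prefers m p u w \<longleftrightarrow> (\<forall>j<m. u j = w j) \<or> lex_prefers m p u w"

definition pareto_optimal :: "nat \<Rightarrow> nat \<Rightarrow> (nat \<Rightarrow> real) \<Rightarrow> (nat \<Rightarrow> real)
    \<Rightarrow> (nat \<Rightarrow> nat \<Rightarrow> nat) \<Rightarrow> (nat \<Rightarrow> nat \<Rightarrow> real) \<Rightarrow> bool" where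
  "pareto_optimal n m q r pref b \<longleftrightarrow>
     \<not> (\<exists>a. is_allocation n m q r a \<and>
            (\<forall>i<n. weakly_prefers m (pref i) (a i) (b i)) \<and>
            (\<exists>i<n. lex_prefers m (pref i) (a i) (b i)))"

text \<open>Eating process. x i j t = cumulative amount of good j received by agent i up to time t.
  Good j is exhausted at time s if the total amount handed out has reached q j.\<close>
definition exhausted :: "nat \<Rightarrow> (nat \<Rightarrow> real) \<Rightarrow> (nat \<Rightarrow> nat \<Rightarrow> real \<Rightarrow> real) \<Rightarrow> nat \<Rightarrow> real \<Rightarrow> bool" where
  "exhausted n q x j s \<longleftrightarrow> (\<Sum>i<n. x i j s) \<ge> q j"

definition receiving :: "nat \<Rightarrow> nat \<Rightarrow> (nat \<Rightarrow> real) \<Rightarrow> (nat \<Rightarrow> nat \<Rightarrow> real \<Rightarrow> real)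
    \<Rightarrow> (nat \<Rightarrow> nat) \<Rightarrow> nat \<Rightarrow> real \<Rightarrow> bool" where
  "receiving n m q x p j s \<longleftrightarrow>
     (\<exists>l<m. p l = j \<and> \<not> exhausted n q x j s \<and> (\<forall>l'<l. exhausted n q x (p l') s))"

definition SG_trajectory :: "nat \<Rightarrow> nat \<Rightarrow> (nat \<Rightarrow> real) \<Rightarrow> (nat \<Rightarrow> real \<Rightarrow> real)
    \<Rightarrow> (nat \<Rightarrow> nat \<Rightarrow> nat) \<Rightarrow> (nat \<Rightarrow> nat \<Rightarrow> real \<Rightarrow> real) \<Rightarrow> bool" where
  "SG_trajectory n m q \<eta> \<sigma> x \<longleftrightarrow>
     (\<forall>i<n. \<forall>j<m. \<forall>t\<in>{0..1}.
        ((\<lambda>s. \<eta> i s * (if receiving n m q x (\<sigma> i) j s then 1 else 0)) has_integral x i j t) {0..t})"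

definition SG_outcome :: "nat \<Rightarrow> nat \<Rightarrow> (nat \<Rightarrow> real) \<Rightarrow> (nat \<Rightarrow> real \<Rightarrow> real)
    \<Rightarrow> (nat \<Rightarrow> nat \<Rightarrow> nat) \<Rightarrow> (nat \<Rightarrow> nat \<Rightarrow> real) \<Rightarrow> bool" where
  "SG_outcome n m q \<eta> \<sigma> a \<longleftrightarrow>
     (\<exists>x. SG_trajectory n m q \<eta> \<sigma> x \<and> (\<forall>i<n. \<forall>j<m. a i j = x i j 1))"

end

theory Submission
  imports Defs
begin

text \<open>Order the goods by exhaustion time in the truthful run. An agent holds a positive amount
  of good j only if it ate j at some moment, and then every good it ranks above j was already
  exhausted, i.e. exhausted strictly before j. By well-founded induction along this order, an
  allocation that every agent weakly prefers must give each agent at least its SG share of j;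
  since both allocations hand out exactly q j of good j, they agree on j. So no agent can strictly
  prefer it.\<close>

lemma weakly_prefers_ge_at_rank:
  assumes "weakly_prefers m p u w" and "p l = j" and "j < m"
    and prefix: "\<forall>l'<l. u (p l') = w (p l')"
  shows "w j \<le> u j"
  using assms(1) unfolding weakly_prefers_def
proof
  assume "\<forall>j<m. u j = w j"
  then show ?thesis using \<open>j < m\<close> by simp
next
  assume "lex_prefers m p u w"
  then obtain k where "\<forall>l<k. u (p l) = w (p l)" and "u (p k) > w (p k)"
    unfolding lex_prefers_def by blast
  then show ?thesis
    using prefix \<open>p l = j\<close> by (cases k l rule: linorder_cases) force+
qed

lemma pareto_optimal_if_priority_order:
  fixes R :: "(nat \<times> nat) set" and b :: "nat \<Rightarrow> nat \<Rightarrow> real"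
  assumes "wf R"
    and bids: "\<forall>i<n. \<forall>l<m. \<pi> i l < m"
    and columns: "\<forall>j<m. (\<Sum>i<n. b i j) = q j"
    and priority: "\<And>i j. i < n \<Longrightarrow> j < m \<Longrightarrow> b i j > 0 \<Longrightarrow>
                     \<exists>l<m. \<pi> i l = j \<and> (\<forall>l'<l. (\<pi> i l', j) \<in> R)"
  shows "pareto_optimal n m q r \<pi> b"
  unfolding pareto_optimal_def
proof
  assume "\<exists>a. is_allocation n m q r a \<and> (\<forall>i<n. weakly_prefers m (\<pi> i) (a i) (b i)) \<and>
            (\<exists>i<n. lex_prefers m (\<pi> i) (a i) (b i))"
  then obtain a where alloc: "is_allocation n m q r a"
    and weak: "\<forall>i<n. weakly_prefers m (\<pi> i) (a i) (b i)"
    and strict: "\<exists>i<n. lex_prefers m (\<pi> i) (a i) (b i)" by blast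
  have agree: "\<forall>i<n. a i j = b i j" if "j < m" for j
    using \<open>wf R\<close> that
  proof (induction j rule: wf_induct_rule)
    case (less j)
    have ge: "b i j \<le> a i j" if "i < n" for i
    proof (cases "b i j > 0")
      case False
      then show ?thesis using alloc \<open>i < n\<close> \<open>j < m\<close> unfolding is_allocation_def by force
    next
      case True
      then obtain l where "l < m" "\<pi> i l = j" and before: "\<forall>l'<l. (\<pi> i l', j) \<in> R"
        using priority \<open>i < n\<close> \<open>j < m\<close> by blast
      have "\<forall>l'<l. a i (\<pi> i l') = b i (\<pi> i l')"
      proof (intro allI impI)
        fix l' assume "l' < l"
        then have "\<pi> i l' < m" and "(\<pi> i l', j) \<in> R"
          using bids before \<open>i < n\<close> \<open>l < m\<close> by simp_all
        then show "a i (\<pi> i l') = b i (\<pi> i l')" using less.IH \<open>i < n\<close> by blast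
      qed
      then show ?thesis
        by (rule weakly_prefers_ge_at_rank[OF weak[rule_format, OF \<open>i < n\<close>] \<open>\<pi> i l = j\<close> \<open>j < m\<close>])
    qed
    have sums: "(\<Sum>i<n. b i j) = (\<Sum>i<n. a i j)"
      using alloc columns \<open>j < m\<close> unfolding is_allocation_def by simp
    show ?case
    proof (intro allI impI)
      fix i assume "i < n"
      have "b i j = a i j"
        by (rule sum_mono_inv[OF sums]) (use ge \<open>i < n\<close> in auto)
      then show "a i j = b i j" by simp
    qed
  qed
  obtain i k where "i < n" "k < m" "a i (\<pi> i k) > b i (\<pi> i k)"
    using strict unfolding lex_prefers_def by blast
  moreover have "\<pi> i k < m" using bids \<open>i < n\<close> \<open>k < m\<close> by blast
  ultimately show False using agree by force
qed

lemma ex1_receiving: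
  assumes "bij_betw p {..<m} {..<m}" and "j0 < m" and "\<not> exhausted n q x j0 s"
  shows "\<exists>!j. j < m \<and> receiving n m q x p j s"
proof -
  let ?E = "\<lambda>j. exhausted n q x j s"
  obtain l1 where "l1 < m" "p l1 = j0"
    using assms(1,2) by (metis bij_betw_iff_bijections lessThan_iff)
  define l0 where "l0 = (LEAST l. l < m \<and> \<not> ?E (p l))"
  have l0: "l0 < m" "\<not> ?E (p l0)"
    using LeastI[of "\<lambda>l. l < m \<and> \<not> ?E (p l)" l1] \<open>l1 < m\<close> \<open>p l1 = j0\<close> assms(3)
    unfolding l0_def by auto
  have below_l0: "?E (p l')" if "l' < l0" for l'
    using not_less_Least[of l' "\<lambda>l. l < m \<and> \<not> ?E (p l)"] that l0 unfolding l0_def by auto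
  have "receiving n m q x p j s \<longleftrightarrow> j = p l0" for j
  proof
    assume "receiving n m q x p j s"
    then obtain l where "p l = j" "\<not> ?E j" "\<forall>l'<l. ?E (p l')"
      unfolding receiving_def by blast
    then have "\<not> l < l0" and "\<not> l0 < l" using below_l0 l0 by auto
    then show "j = p l0" using \<open>p l = j\<close> by simp
  qed (use l0 below_l0 in \<open>auto simp: receiving_def\<close>)
  moreover have "p l0 < m" using assms(1) l0 by (auto simp: bij_betw_def)
  ultimately show ?thesis by auto
qed

locale SG_run =
  fixes n m :: nat and q :: "nat \<Rightarrow> real" and \<eta> :: "nat \<Rightarrow> real \<Rightarrow> real"
    and \<sigma> :: "nat \<Rightarrow> nat \<Rightarrow> nat" and x :: "nat \<Rightarrow> nat \<Rightarrow> real \<Rightarrow> real"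
  assumes trajectory: "SG_trajectory n m q \<eta> \<sigma> x"
    and speed_nonneg: "\<forall>i<n. \<forall>t\<in>{0..1}. \<eta> i t \<ge> 0"
    and bids: "\<forall>i<n. bij_betw (\<sigma> i) {..<m} {..<m}"
begin

definition rate :: "nat \<Rightarrow> nat \<Rightarrow> real \<Rightarrow> real" where
  "rate i j s = \<eta> i s * (if receiving n m q x (\<sigma> i) j s then 1 else 0)"

lemma received_has_integral:
  "i < n \<Longrightarrow> j < m \<Longrightarrow> t \<in> {0..1} \<Longrightarrow> (rate i j has_integral x i j t) {0..t}"
  using trajectory unfolding SG_trajectory_def rate_def by blast

lemma rate_nonneg: "i < n \<Longrightarrow> s \<in> {0..1} \<Longrightarrow> 0 \<le> rate i j s"
  using speed_nonneg unfolding rate_def by auto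

lemma received_mono:
  assumes "i < n" "j < m" "0 \<le> s" "s \<le> t" "t \<le> 1"
  shows "x i j s \<le> x i j t"
  by (rule has_integral_subset_le[OF _ received_has_integral received_has_integral])
     (use assms rate_nonneg in auto)

lemma received_at_start: "i < n \<Longrightarrow> j < m \<Longrightarrow> x i j 0 = 0"
  using received_has_integral[of i j 0] by (simp add: has_integral_iff)

lemma exhausted_mono:
  assumes "exhausted n q x j s" "j < m" "0 \<le> s" "s \<le> t" "t \<le> 1"
  shows "exhausted n q x j t"
proof -
  have "(\<Sum>i<n. x i j s) \<le> (\<Sum>i<n. x i j t)"
    by (rule sum_mono) (use received_mono assms in auto)
  with assms(1) show ?thesis unfolding exhausted_def by linarith
qed

lemma received_after_exhausted:
  assumes "exhausted n q x j \<tau>" "\<tau> \<in> {0..1}" "i < n" "j < m"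
  shows "x i j 1 = x i j \<tau>"
proof -
  have "(rate i j has_integral 0) {\<tau>..1}"
  proof (rule has_integral_eq[of _ "\<lambda>_. 0"])
    fix s assume "s \<in> {\<tau>..1}"
    then have "exhausted n q x j s" using exhausted_mono assms by auto
    then show "0 = rate i j s" unfolding rate_def receiving_def by auto
  qed simp
  from has_integral_combine[OF _ _ received_has_integral[OF assms(3,4,2)] this] assms(2)
  have "(rate i j has_integral x i j \<tau> + 0) {0..1}" by auto
  then show ?thesis using received_has_integral[OF assms(3,4), of 1] by (auto dest: has_integral_unique)
qed

lemma received_continuous:
  assumes "i < n" "j < m"
  shows "continuous_on {0..1} (x i j)"
proof -
  have "rate i j integrable_on {0..1}" using received_has_integral[OF assms, of 1] by auto
  from indefinite_integral_continuous_1[OF this] show ?thesis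
    by (rule continuous_on_eq)
       (use received_has_integral assms in \<open>auto intro: integral_unique[symmetric]\<close>)
qed

text \<open>The total handed out is continuous in time, starts at 0 and freezes once it reaches q j,
  so it cannot overshoot.\<close>
lemma total_received_le:
  assumes "j < m" "q j \<ge> 0"
  shows "(\<Sum>i<n. x i j 1) \<le> q j"
proof (rule ccontr)
  assume over: "\<not> ?thesis"
  have "continuous_on {0..1} (\<lambda>t. \<Sum>i<n. x i j t)"
    using received_continuous \<open>j < m\<close> by (auto intro: continuous_on_sum)
  moreover have "(\<Sum>i<n. x i j 0) \<le> q j" using received_at_start assms by simp
  ultimately obtain \<tau> where \<tau>: "0 \<le> \<tau>" "\<tau> \<le> 1" "(\<Sum>i<n. x i j \<tau>) = q j"
    using IVT'[of "\<lambda>t. \<Sum>i<n. x i j t" 0 "q j" 1] over by auto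
  then have "exhausted n q x j \<tau>" unfolding exhausted_def by simp
  then have "(\<Sum>i<n. x i j 1) = (\<Sum>i<n. x i j \<tau>)"
    using received_after_exhausted \<tau> \<open>j < m\<close> by simp
  with over \<tau> show False by simp
qed

lemma total_rate_eq_speed:
  assumes "i < n" "j0 < m" "\<not> exhausted n q x j0 s"
  shows "(\<Sum>j<m. rate i j s) = \<eta> i s"
proof -
  obtain j1 where "j1 < m" and first: "\<And>j. j < m \<Longrightarrow> receiving n m q x (\<sigma> i) j s \<longleftrightarrow> j = j1"
    using ex1_receiving[OF _ assms(2,3)] bids \<open>i < n\<close> by metis
  have "(\<Sum>j<m. rate i j s) = (\<Sum>j<m. if j = j1 then \<eta> i s else 0)"
    by (rule sum.cong) (simp_all add: rate_def first)
  also have "\<dots> = \<eta> i s" using \<open>j1 < m\<close> by simp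
  finally show ?thesis .
qed

text \<open>While some good is left every agent eats at full speed, so an unexhausted good at time 1
  would mean all of r was eaten from strictly less than all of q.\<close>
lemma exhausted_at_end:
  assumes q_nonneg: "\<forall>j<m. q j \<ge> 0"
    and speed_int: "\<forall>i<n. (\<eta> i has_integral r i) {0..1}"
    and balance: "(\<Sum>j<m. q j) = (\<Sum>i<n. r i)"
    and "j < m"
  shows "exhausted n q x j 1"
proof (rule ccontr)
  assume not_exh: "\<not> exhausted n q x j 1"
  have "\<not> exhausted n q x j s" if "s \<in> {0..1}" for s
    using exhausted_mono[of j s 1] not_exh that \<open>j < m\<close> by auto
  then have eaten: "(\<Sum>j'<m. x i j' 1) = r i" if "i < n" for i
  proof -
    have "((\<lambda>s. \<Sum>j'<m. rate i j' s) has_integral (\<Sum>j'<m. x i j' 1)) {0..1}"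
      by (rule has_integral_sum) (use received_has_integral \<open>i < n\<close> in auto)
    then have "(\<eta> i has_integral (\<Sum>j'<m. x i j' 1)) {0..1}"
      by (rule has_integral_eq[rotated])
         (use total_rate_eq_speed \<open>i < n\<close> \<open>j < m\<close> \<open>\<And>s. s \<in> {0..1} \<Longrightarrow> _\<close> in auto)
    then show ?thesis using speed_int \<open>i < n\<close> by (auto dest: has_integral_unique)
  qed
  have "(\<Sum>i<n. r i) = (\<Sum>i<n. \<Sum>j'<m. x i j' 1)"
    using eaten by simp
  also have "\<dots> = (\<Sum>j'<m. \<Sum>i<n. x i j' 1)"
    by (rule sum.swap)
  also have "\<dots> < (\<Sum>j'<m. q j')"
  proof (rule sum_strict_mono_ex1)
    show "\<exists>j'\<in>{..<m}. (\<Sum>i<n. x i j' 1) < q j'"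
      by (intro bexI[of _ j]) (use not_exh \<open>j < m\<close> in \<open>auto simp: exhausted_def\<close>)
  qed (use total_received_le q_nonneg in auto)
  finally show False using balance by simp
qed

lemma total_received:
  assumes "\<forall>j<m. q j \<ge> 0"
    and "\<forall>i<n. (\<eta> i has_integral r i) {0..1}"
    and "(\<Sum>j<m. q j) = (\<Sum>i<n. r i)"
    and "j < m"
  shows "(\<Sum>i<n. x i j 1) = q j"
  using exhausted_at_end[OF assms] total_received_le assms(1,4)
  unfolding exhausted_def by (simp add: order_antisym)

lemma receiving_if_received:
  assumes "i < n" "j < m" "x i j 1 > 0"
  shows "\<exists>s\<in>{0..1}. receiving n m q x (\<sigma> i) j s"
proof (rule ccontr)
  assume "\<not> ?thesis"
  then have "(rate i j has_integral 0) {0..1}"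
    by (intro has_integral_eq[OF _ has_integral_0]) (auto simp: rate_def)
  then have "x i j 1 = 0"
    using received_has_integral[OF assms(1,2), of 1] has_integral_unique by auto
  with assms(3) show False by simp
qed

definition exhaustion_order :: "(nat \<times> nat) set" where
  "exhaustion_order = {(j', j). j' < m \<and> j < m \<and>
     (\<exists>s\<in>{0..1}. exhausted n q x j' s \<and> \<not> exhausted n q x j s)}"

lemma wf_exhaustion_order: "wf exhaustion_order"
proof (rule finite_acyclic_wf)
  have "exhaustion_order \<subseteq> {..<m} \<times> {..<m}" unfolding exhaustion_order_def by auto
  then show "finite exhaustion_order" by (rule finite_subset) simp
  have "trans exhaustion_order"
  proof (rule transI)
    fix j1 j2 j3 assume "(j1, j2) \<in> exhaustion_order" "(j2, j3) \<in> exhaustion_order"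
    then obtain s s' where jm: "j1 < m" "j2 < m" "j3 < m"
      and s: "s \<in> {0..1}" "exhausted n q x j1 s" "\<not> exhausted n q x j2 s"
      and s': "s' \<in> {0..1}" "exhausted n q x j2 s'" "\<not> exhausted n q x j3 s'"
      unfolding exhaustion_order_def by auto
    have "s \<le> s'" using exhausted_mono[of j2 s' s] s s' jm by force
    then have "exhausted n q x j1 s'" using exhausted_mono[of j1 s s'] s s' jm by auto
    with s' jm show "(j1, j3) \<in> exhaustion_order" unfolding exhaustion_order_def by auto
  qed
  moreover have "irrefl exhaustion_order" unfolding exhaustion_order_def irrefl_def by auto
  ultimately show "acyclic exhaustion_order" by (simp add: acyclic_irrefl)
qed

lemma received_only_after_preferred_exhausted:
  assumes "i < n" "j < m" "x i j 1 > 0"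
  shows "\<exists>l<m. \<sigma> i l = j \<and> (\<forall>l'<l. (\<sigma> i l', j) \<in> exhaustion_order)"
proof -
  obtain s l where s: "s \<in> {0..1}" "\<not> exhausted n q x j s" and "l < m" "\<sigma> i l = j"
    and preferred: "\<forall>l'<l. exhausted n q x (\<sigma> i l') s"
    using receiving_if_received[OF assms] unfolding receiving_def by blast
  have "(\<sigma> i l', j) \<in> exhaustion_order" if "l' < l" for l'
  proof -
    have "\<sigma> i l' < m"
      using bids \<open>i < n\<close> \<open>l < m\<close> that by (meson bij_betw_apply lessThan_iff order.strict_trans)
    then show ?thesis
      using s preferred \<open>j < m\<close> that unfolding exhaustion_order_def by blast
  qed
  then show ?thesis using \<open>l < m\<close> \<open>\<sigma> i l = j\<close> by blast
qed

end

theorem theorem5: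
  fixes n m :: nat and q r :: "nat \<Rightarrow> real" and \<eta> :: "nat \<Rightarrow> real \<Rightarrow> real"
    and \<pi> :: "nat \<Rightarrow> nat \<Rightarrow> nat" and aPi :: "nat \<Rightarrow> nat \<Rightarrow> real"
  assumes q_pos: "\<forall>j<m. q j > 0"
    and r_pos: "\<forall>i<n. r i > 0"
    and balance: "(\<Sum>j<m. q j) = (\<Sum>i<n. r i)"
    and pref: "\<forall>i<n. bij_betw (\<pi> i) {..<m} {..<m}"
    and speed_nonneg: "\<forall>i<n. \<forall>t\<in>{0..1}. \<eta> i t \<ge> 0"
    and speed_int: "\<forall>i<n. (\<eta> i has_integral r i) {0..1}"
    and outcome: "SG_outcome n m q \<eta> \<pi> aPi"
  shows "pareto_optimal n m q r \<pi> aPi"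
proof -
  obtain x where "SG_trajectory n m q \<eta> \<pi> x" and final: "\<forall>i<n. \<forall>j<m. aPi i j = x i j 1"
    using outcome unfolding SG_outcome_def by blast
  then interpret SG_run n m q \<eta> \<pi> x
    using speed_nonneg pref by unfold_locales
  have q_nonneg: "\<forall>j<m. q j \<ge> 0" using q_pos by (simp add: less_imp_le)
  show ?thesis
  proof (rule pareto_optimal_if_priority_order[OF wf_exhaustion_order])
    show "\<forall>i<n. \<forall>l<m. \<pi> i l < m"
      using pref by (meson bij_betw_apply lessThan_iff)
    show "\<forall>j<m. (\<Sum>i<n. aPi i j) = q j"
      using total_received[OF q_nonneg speed_int balance] final by simp
    show "\<exists>l<m. \<pi> i l = j \<and> (\<forall>l'<l. (\<pi> i l', j) \<in> exhaustion_order)"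
      if "i < n" "j < m" "aPi i j > 0" for i j
      using received_only_after_preferred_exhausted that final by simp
  qed
qed

end
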